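(* Let $n,m \in \mathbb{N}$, $a \in \Delta_n^+$, $b \in \Delta_m^+$, $\lambda > 0$, and let $g \colon \mathbb{R}^{n\times m} \to \mathbb{R}$ be a function whose gradient $\nabla g$ exists. Define $T_\lambda \colon \mathbb{R}^{n\times m} \to \Pi_{a,b}^+$ by $T_\lambda = \Phi_\lambda \circ \nabla g$, i.e. \[ T_\lambda(A) = \operatorname{argmin}_{\pi \in \Pi_{a,b}} \big(\langle \nabla g(A), \pi\rangle + \lambda h(\pi)\big) \quad \forall A \in \mathbb{R}^{n\times m}. \] If $g$ is convex, then the problem $\min_{\pi \in \Pi_{a,b}} \big(g(\pi) + \lambda h(\pi)\big)$ admits a unique minimizer $\pi^\star$, this minimizer lies in $\Pi_{a,b}^+$, and $\pi^\star$ is the unique fixed point of $T_\lambda$, i.e. $\pi^\star = T_\lambda(\pi^\star)$ and $T_\lambda$ has no other fixed point.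
   Context: $\Delta_n^+ := \{a \in \mathbb{R}^n : a_i > 0\ \forall i,\ \sum_i a_i = 1\}$. $\Pi_{a,b} := \{\pi \in \mathbb{R}_+^{n\times m} : \pi 1_m = a,\ \pi^\top 1_n = b\}$ (couplings), and $\Pi_{a,b}^+ := \{\pi \in \Pi_{a,b} : \pi_{ij} > 0\ \forall i,j\}$. $h(\pi) := \sum_{i,j} \pi_{ij}\log\frac{\pi_{ij}}{e}$ (with $0\log 0 = 0$) is the entropy function. $\langle A, B\rangle = \mathrm{tr}(A^\top B)$ is the Frobenius inner product. For $C \in \mathbb{R}^{n\times m}$, $\Phi_\lambda(C) := \operatorname{argmin}_{\pi \in \Pi_{a,b}} (\langle C,\pi\rangle + \lambda h(\pi))$, which is a well-defined (unique) element of $\Pi_{a,b}^+$. *)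

theory Defs
  imports "HOL-Analysis.Analysis"
begin

text \<open>Matrices in R^{n x m} are rendered as real^'m^'n (rows indexed by 'n, columns by 'm).
  The inner product on this type is exactly the Frobenius inner product.\<close>

definition simplex_pos :: "(real^'k) set" where
  "simplex_pos = {a. (\<forall>i. a $ i > 0) \<and> (\<Sum>i\<in>UNIV. a $ i) = 1}"

definition couplings :: "real^'n \<Rightarrow> real^'m \<Rightarrow> (real^'m^'n) set" where
  "couplings a b = {p. (\<forall>i j. p $ i $ j \<ge> 0) \<and>
      (\<forall>i. (\<Sum>j\<in>UNIV. p $ i $ j) = a $ i) \<and> (\<forall>j. (\<Sum>i\<in>UNIV. p $ i $ j) = b $ j)}"

definition couplings_pos :: "real^'n \<Rightarrow> real^'m \<Rightarrow> (real^'m^'n) set" where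
  "couplings_pos a b = {p \<in> couplings a b. \<forall>i j. p $ i $ j > 0}"

definition xlogx_e :: "real \<Rightarrow> real" where
  "xlogx_e x = (if x = 0 then 0 else x * ln (x / exp 1))"

definition entropy :: "real^'m^'n \<Rightarrow> real" where
  "entropy p = (\<Sum>i\<in>UNIV. \<Sum>j\<in>UNIV. xlogx_e (p $ i $ j))"

definition Phi :: "real^'n \<Rightarrow> real^'m \<Rightarrow> real \<Rightarrow> real^'m^'n \<Rightarrow> real^'m^'n" where
  "Phi a b lam C = (THE p. p \<in> couplings a b \<and>
      (\<forall>q\<in>couplings a b. C \<bullet> p + lam * entropy p \<le> C \<bullet> q + lam * entropy q))"

end

(* The objective g + lam h is continuous and strictly convex on the compact convex set of
   couplings (strictly convex because x ln x is), so it has a unique minimizer. Moving a step t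
   from a coupling with a zero entry towards the positive product coupling a b^T changes the
   objective by at most t (C + lam r ln t) for a constant C and some r > 0, which is negative
   for small t; hence the minimizer is positive. Finally, for convex differentiable g a coupling
   minimizes g + lam h iff it minimizes the linearization <grad g(pi), .> + lam h, i.e. iff it
   is a fixed point of Phi o grad g. *)

theory Submission
  imports Defs
begin

lemma xlogx_e_eq: "x \<ge> 0 \<Longrightarrow> xlogx_e x = x * ln x - x"
  by (cases "x = 0") (simp_all add: xlogx_e_def ln_div algebra_simps)

lemma xlogx_e_scale:
  assumes "t > 0" "r > 0"
  shows "xlogx_e (t * r) = t * xlogx_e r + t * r * ln t"
  using assms by (simp add: xlogx_e_eq ln_mult algebra_simps)

lemma xlogx_e_above_tangent_strict:
  assumes m: "m > 0" and x: "x \<ge> 0" and xm: "x \<noteq> m"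
  shows "xlogx_e m + ln m * (x - m) < xlogx_e x"
proof (cases "x = 0")
  case True
  then show ?thesis using m by (simp add: xlogx_e_eq algebra_simps)
next
  case False
  with x have "x > 0" by simp
  with m xm have "x * (ln m - ln x) < x * ((m - x) / x)"
    by (intro mult_strict_left_mono ln_diff_less) auto
  also have "\<dots> = m - x"
    using \<open>x > 0\<close> by simp
  finally show ?thesis
    using \<open>x > 0\<close> m by (simp add: xlogx_e_eq algebra_simps)
qed

lemma xlogx_e_strict_convex:
  assumes x: "x \<ge> 0" and y: "y \<ge> 0" and xy: "x \<noteq> y" and t: "0 < t" "t < 1"
  shows "xlogx_e ((1 - t) * x + t * y) < (1 - t) * xlogx_e x + t * xlogx_e y"
proof -
  define m where "m = (1 - t) * x + t * y"
  have m: "m > 0"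
    using x y xy t unfolding m_def
    by (cases "x = 0") (auto intro: add_pos_nonneg add_nonneg_pos)
  have "x - m = t * (x - y)" "y - m = (1 - t) * (y - x)"
    unfolding m_def by (simp_all add: algebra_simps)
  with xy t have "x \<noteq> m" "y \<noteq> m"
    by auto
  with m t x y have "(1 - t) * (xlogx_e m + ln m * (x - m)) + t * (xlogx_e m + ln m * (y - m))
      < (1 - t) * xlogx_e x + t * xlogx_e y"
    by (intro add_strict_mono mult_strict_left_mono xlogx_e_above_tangent_strict) auto
  also have "(1 - t) * (xlogx_e m + ln m * (x - m)) + t * (xlogx_e m + ln m * (y - m)) = xlogx_e m"
    unfolding m_def by (simp add: algebra_simps)
  finally show ?thesis
    unfolding m_def .
qed

lemma convex_on_xlogx_e: "convex_on {0..} xlogx_e"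
proof (rule convex_onI)
  fix t x y :: real
  assume "0 < t" "t < 1" "x \<in> {0..}" "y \<in> {0..}"
  then show "xlogx_e ((1 - t) *\<^sub>R x + t *\<^sub>R y) \<le> (1 - t) * xlogx_e x + t * xlogx_e y"
    using xlogx_e_strict_convex[of x y t] by (cases "x = y") (auto simp: algebra_simps)
qed (rule convex_real_interval)

lemma tendsto_x_ln_x_at_right_0: "((\<lambda>x::real. x * ln x) \<longlongrightarrow> 0) (at_right 0)"
proof -
  have "((\<lambda>y::real. - (ln y / y)) \<longlongrightarrow> 0) at_top"
    using tendsto_minus[OF ln_x_over_x_tendsto_0] by simp
  then have "((\<lambda>y::real. inverse y * ln (inverse y)) \<longlongrightarrow> 0) at_top"
    by (rule Lim_transform_eventually)
      (auto simp: eventually_at_top_dense ln_inverse divide_inverse)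
  then show ?thesis
    by (simp only: filterlim_at_right_to_top)
qed

lemma continuous_on_xlogx_e: "continuous_on {0..} xlogx_e"
proof -
  have "continuous_on {0..} (\<lambda>x::real. x * ln x - x)"
    unfolding continuous_on_def
  proof (intro ballI)
    fix x :: real assume "x \<in> {0..}"
    show "((\<lambda>x. x * ln x - x) \<longlongrightarrow> x * ln x - x) (at x within {0..})"
    proof (cases "x = 0")
      case True
      have "((\<lambda>x::real. x * ln x - x) \<longlongrightarrow> 0) (at_right 0)"
        using tendsto_diff[OF tendsto_x_ln_x_at_right_0 tendsto_ident_at] by simp
      then show ?thesis
        using True by (simp add: at_within_Ici_at_right)
    next
      case False
      with \<open>x \<in> {0..}\<close> have "x > 0" by simp
      then show ?thesis
        by (intro tendsto_intros tendsto_within_subset[OF tendsto_ident_at]) auto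
    qed
  qed
  then show ?thesis
    by (rule continuous_on_eq) (simp add: xlogx_e_eq)
qed

definition nonneg_matrices :: "(real^'m^'n) set" where
  "nonneg_matrices = {p. \<forall>i j. 0 \<le> p $ i $ j}"

lemma convex_nonneg_matrices: "convex nonneg_matrices"
  unfolding nonneg_matrices_def convex_def by (auto intro: add_nonneg_nonneg)

lemma entropy_eq_sum_entries: "entropy p = (\<Sum>(i, j)\<in>UNIV. xlogx_e (p $ i $ j))"
  by (simp add: entropy_def sum.cartesian_product)

lemma entropy_convex_combination:
  "(1 - t) * entropy p + t * entropy q =
     (\<Sum>(i, j)\<in>UNIV. (1 - t) * xlogx_e (p $ i $ j) + t * xlogx_e (q $ i $ j))"
  by (simp add: entropy_eq_sum_entries sum.distrib sum_distrib_left case_prod_unfold)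

lemma convex_on_entropy: "convex_on nonneg_matrices entropy"
proof (rule convex_onI)
  fix t :: real and p q :: "real^'m^'n"
  assume t: "0 < t" "t < 1" and pq: "p \<in> nonneg_matrices" "q \<in> nonneg_matrices"
  have "xlogx_e ((1 - t) * p $ i $ j + t * q $ i $ j)
      \<le> (1 - t) * xlogx_e (p $ i $ j) + t * xlogx_e (q $ i $ j)" for i j
    using convex_onD[OF convex_on_xlogx_e, of t "p $ i $ j" "q $ i $ j"] t pq
    by (simp add: nonneg_matrices_def)
  then show "entropy ((1 - t) *\<^sub>R p + t *\<^sub>R q) \<le> (1 - t) * entropy p + t * entropy q"
    unfolding entropy_convex_combination unfolding entropy_eq_sum_entries
    by (auto intro: sum_mono)
qed (rule convex_nonneg_matrices)

lemma entropy_strict_convex: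
  assumes pq: "p \<in> nonneg_matrices" "q \<in> nonneg_matrices" "p \<noteq> q" and t: "0 < t" "t < 1"
  shows "entropy ((1 - t) *\<^sub>R p + t *\<^sub>R q) < (1 - t) * entropy p + t * entropy q"
proof -
  obtain i0 j0 where "p $ i0 $ j0 \<noteq> q $ i0 $ j0"
    using pq(3) by (metis vec_eq_iff)
  then have "xlogx_e ((1 - t) * p $ i0 $ j0 + t * q $ i0 $ j0)
      < (1 - t) * xlogx_e (p $ i0 $ j0) + t * xlogx_e (q $ i0 $ j0)"
    using pq t by (intro xlogx_e_strict_convex) (auto simp: nonneg_matrices_def)
  then have "\<exists>(i, j)\<in>UNIV. xlogx_e ((1 - t) * p $ i $ j + t * q $ i $ j)
      < (1 - t) * xlogx_e (p $ i $ j) + t * xlogx_e (q $ i $ j)"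
    by blast
  moreover have "\<forall>(i, j)\<in>UNIV. xlogx_e ((1 - t) * p $ i $ j + t * q $ i $ j)
      \<le> (1 - t) * xlogx_e (p $ i $ j) + t * xlogx_e (q $ i $ j)"
    using pq t convex_onD[OF convex_on_xlogx_e, of t] by (auto simp: nonneg_matrices_def)
  ultimately show ?thesis
    unfolding entropy_convex_combination unfolding entropy_eq_sum_entries
    by (intro sum_strict_mono_ex1) (simp_all add: case_prod_unfold)
qed

lemma continuous_on_entropy: "continuous_on nonneg_matrices entropy"
  unfolding entropy_def
  by (intro continuous_on_sum continuous_on_compose2[OF continuous_on_xlogx_e] continuous_intros)
    (auto simp: nonneg_matrices_def)

lemma entropy_convex_combination_zero_entry:
  assumes p: "p \<in> nonneg_matrices" and q: "q \<in> nonneg_matrices"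
    and p0: "p $ i $ j = 0" and q0: "q $ i $ j > 0" and t: "0 < t" "t \<le> 1"
  shows "entropy ((1 - t) *\<^sub>R p + t *\<^sub>R q)
    \<le> (1 - t) * entropy p + t * entropy q + t * q $ i $ j * ln t"
proof -
  have entry: "xlogx_e ((1 - t) * p $ k $ l + t * q $ k $ l)
      \<le> (1 - t) * xlogx_e (p $ k $ l) + t * xlogx_e (q $ k $ l)
        + (if (k, l) = (i, j) then t * q $ i $ j * ln t else 0)" for k l
  proof (cases "(k, l) = (i, j)")
    case True
    then show ?thesis
      using p0 xlogx_e_scale[OF t(1) q0] by (simp add: xlogx_e_def[of 0])
  next
    case False
    then show ?thesis
      using convex_onD[OF convex_on_xlogx_e, of t "p $ k $ l" "q $ k $ l"] p q t
      by (auto simp: nonneg_matrices_def)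
  qed
  have "entropy ((1 - t) *\<^sub>R p + t *\<^sub>R q)
      \<le> (\<Sum>x\<in>UNIV. (case x of (k, l) \<Rightarrow> (1 - t) * xlogx_e (p $ k $ l) + t * xlogx_e (q $ k $ l))
        + (if x = (i, j) then t * q $ i $ j * ln t else 0))"
    unfolding entropy_eq_sum_entries using entry by (auto intro: sum_mono)
  also have "\<dots> = (1 - t) * entropy p + t * entropy q + t * q $ i $ j * ln t"
    by (simp only: sum.distrib entropy_convex_combination) simp
  finally show ?thesis .
qed

lemma couplings_subset_nonneg_matrices: "couplings a b \<subseteq> nonneg_matrices"
  by (auto simp: couplings_def nonneg_matrices_def)

lemma convex_couplings: "convex (couplings a b)"
  unfolding convex_def couplings_def
  by (auto simp: sum.distrib sum_distrib_left[symmetric] simp flip: distrib_right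
      intro: add_nonneg_nonneg)

lemma compact_couplings: "compact (couplings a b)"
proof -
  have "closed (couplings a b)"
    unfolding couplings_def
    by (intro closed_Collect_conj closed_Collect_all closed_Collect_le closed_Collect_eq
        continuous_intros)
  moreover have "norm p \<le> sum (($) a) UNIV" if "p \<in> couplings a b" for p
  proof -
    have "norm p \<le> (\<Sum>i\<in>UNIV. norm (p $ i))"
      unfolding norm_vec_def by (rule L2_set_le_sum) auto
    also have "\<dots> \<le> (\<Sum>i\<in>UNIV. \<Sum>j\<in>UNIV. \<bar>p $ i $ j\<bar>)"
      by (intro sum_mono norm_le_l1_cart)
    also have "\<dots> = sum (($) a) UNIV"
      using that by (simp add: couplings_def)
    finally show ?thesis .
  qed
  then have "bounded (couplings a b)"
    unfolding bounded_iff by blast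
  ultimately show ?thesis
    by (simp add: compact_eq_bounded_closed)
qed

lemma outer_product_in_couplings_pos:
  assumes "a \<in> simplex_pos" "b \<in> simplex_pos"
  shows "(\<chi> i j. a $ i * b $ j) \<in> couplings_pos a b"
  using assms unfolding couplings_pos_def couplings_def simplex_pos_def
  by (auto simp: sum_distrib_left[symmetric] sum_distrib_right[symmetric] less_imp_le)

lemma ex1_minimizer_compact:
  fixes F :: "'a::topological_space \<Rightarrow> real"
  assumes "compact S" "S \<noteq> {}" "continuous_on S F"
    and strict: "\<And>x y. x \<in> S \<Longrightarrow> y \<in> S \<Longrightarrow> x \<noteq> y \<Longrightarrow> \<exists>z\<in>S. F z < max (F x) (F y)"
  shows "\<exists>!x. x \<in> S \<and> (\<forall>y\<in>S. F x \<le> F y)"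
proof (rule ex_ex1I)
  show "\<exists>x. x \<in> S \<and> (\<forall>y\<in>S. F x \<le> F y)"
    using continuous_attains_inf[OF assms(1-3)] by blast
next
  fix x y
  assume x: "x \<in> S \<and> (\<forall>z\<in>S. F x \<le> F z)" and y: "y \<in> S \<and> (\<forall>z\<in>S. F y \<le> F z)"
  show "x = y"
  proof (rule ccontr)
    assume "x \<noteq> y"
    with x y strict obtain z where "z \<in> S" "F z < max (F x) (F y)"
      by blast
    with x y show False
      by (simp add: not_le[symmetric])
  qed
qed

definition entropic_minimizer ::
    "real^'n \<Rightarrow> real^'m \<Rightarrow> real \<Rightarrow> (real^'m^'n \<Rightarrow> real) \<Rightarrow> real^'m^'n \<Rightarrow> bool" where
  "entropic_minimizer a b lam f p \<longleftrightarrow> p \<in> couplings a b \<and>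
     (\<forall>q\<in>couplings a b. f p + lam * entropy p \<le> f q + lam * entropy q)"

lemma ex1_entropic_minimizer:
  assumes a: "a \<in> simplex_pos" and b: "b \<in> simplex_pos" and lam: "lam > 0"
    and f: "convex_on (couplings a b) f" "continuous_on (couplings a b) f"
  shows "\<exists>!p. entropic_minimizer a b lam f p"
  unfolding entropic_minimizer_def
proof (rule ex1_minimizer_compact)
  show "couplings a b \<noteq> {}"
    using outer_product_in_couplings_pos[OF a b] by (auto simp: couplings_pos_def)
  show "continuous_on (couplings a b) (\<lambda>p. f p + lam * entropy p)"
    using continuous_on_subset[OF continuous_on_entropy couplings_subset_nonneg_matrices]
    by (intro continuous_intros f)
  fix p q
  assume pq: "p \<in> couplings a b" "q \<in> couplings a b" "p \<noteq> q"
  define m where "m = (1 - 1/2) *\<^sub>R p + (1/2) *\<^sub>R q"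
  have m: "m \<in> couplings a b"
    unfolding m_def using pq by (intro convex_alt[THEN iffD1, OF convex_couplings, rule_format]) auto
  have f_le: "f m \<le> (1 - 1/2) * f p + (1/2) * f q"
    unfolding m_def using pq by (intro convex_onD[OF f(1)]) auto
  have "entropy m < (1 - 1/2) * entropy p + (1/2) * entropy q"
    unfolding m_def using pq couplings_subset_nonneg_matrices by (intro entropy_strict_convex) auto
  then have "lam * entropy m < lam * ((1 - 1/2) * entropy p + (1/2) * entropy q)"
    using lam by (rule mult_strict_left_mono)
  with m f_le show "\<exists>m\<in>couplings a b. f m + lam * entropy m
      < max (f p + lam * entropy p) (f q + lam * entropy q)"
    by (intro bexI[of _ m]) (auto simp: max_def algebra_simps)
qed (rule compact_couplings)

lemma entropic_minimizer_zero_entry_bound: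
  assumes lam: "lam > 0" and f: "convex_on (couplings a b) f"
    and p: "entropic_minimizer a b lam f p" and p0: "p $ i $ j = 0"
    and r: "r \<in> couplings a b" "r $ i $ j > 0" and t: "0 < t" "t < 1"
  shows "f p + lam * entropy p \<le> f r + lam * entropy r + lam * r $ i $ j * ln t"
proof -
  define pt where "pt = (1 - t) *\<^sub>R p + t *\<^sub>R r"
  have pC: "p \<in> couplings a b"
    using p by (simp add: entropic_minimizer_def)
  have "pt \<in> couplings a b"
    unfolding pt_def using pC r t
    by (intro convex_alt[THEN iffD1, OF convex_couplings, rule_format]) auto
  with p have "f p + lam * entropy p \<le> f pt + lam * entropy pt"
    by (simp add: entropic_minimizer_def)
  also have "\<dots> \<le> (1 - t) * f p + t * f r
      + lam * ((1 - t) * entropy p + t * entropy r + t * r $ i $ j * ln t)"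
  proof (rule add_mono)
    show "f pt \<le> (1 - t) * f p + t * f r"
      unfolding pt_def using pC r t by (intro convex_onD[OF f]) auto
    show "lam * entropy pt \<le> lam * ((1 - t) * entropy p + t * entropy r + t * r $ i $ j * ln t)"
      unfolding pt_def using lam pC r t p0 couplings_subset_nonneg_matrices
      by (intro mult_left_mono entropy_convex_combination_zero_entry) auto
  qed
  finally have "t * (f p + lam * entropy p) \<le> t * (f r + lam * entropy r + lam * r $ i $ j * ln t)"
    by (simp add: algebra_simps)
  with t show ?thesis
    by simp
qed

lemma entropic_minimizer_pos:
  assumes a: "a \<in> simplex_pos" and b: "b \<in> simplex_pos" and lam: "lam > 0"
    and f: "convex_on (couplings a b) f" and p: "entropic_minimizer a b lam f p"
  shows "p \<in> couplings_pos a b"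
proof (rule ccontr)
  have pC: "p \<in> couplings a b"
    using p by (simp add: entropic_minimizer_def)
  assume "p \<notin> couplings_pos a b"
  with pC obtain i j where "\<not> 0 < p $ i $ j"
    by (auto simp: couplings_pos_def)
  moreover have "0 \<le> p $ i $ j"
    using pC by (simp add: couplings_def)
  ultimately have p0: "p $ i $ j = 0"
    by simp
  define r where "r = (\<chi> i j. a $ i * b $ j)"
  have r: "r \<in> couplings a b" "r $ i $ j > 0"
    using outer_product_in_couplings_pos[OF a b] unfolding r_def couplings_pos_def by auto
  define c where "c = f p + lam * entropy p - (f r + lam * entropy r)"
  have "\<forall>\<^sub>F t in at_right 0. c \<le> lam * r $ i $ j * ln t"
  proof (rule eventually_at_rightI[of 0 1])
    fix t :: real
    assume "t \<in> {0<..<1}"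
    with entropic_minimizer_zero_entry_bound[OF lam f p p0 r, of t]
    show "c \<le> lam * r $ i $ j * ln t"
      by (simp add: c_def)
  qed simp
  moreover have "\<forall>\<^sub>F t in at_right 0. ln t < c / (lam * r $ i $ j)"
    using ln_at_0 by (simp add: filterlim_at_bot_dense)
  ultimately have "\<forall>\<^sub>F t in at_right (0::real). False"
  proof eventually_elim
    case (elim t)
    with lam r(2) show False
      by (simp add: less_divide_eq mult.commute)
  qed
  then show False
    by simp
qed

lemma convex_on_inner: "convex S \<Longrightarrow> convex_on S (\<lambda>x. C \<bullet> x)"
  by (rule convex_onI) (simp_all add: inner_add_right)

lemma Phi_eq_iff:
  assumes a: "a \<in> simplex_pos" and b: "b \<in> simplex_pos" and lam: "lam > 0"
  shows "Phi a b lam C = p \<longleftrightarrow> entropic_minimizer a b lam (\<lambda>x. C \<bullet> x) p"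
proof -
  have "convex_on (couplings a b) (\<lambda>x. C \<bullet> x)"
    by (rule convex_on_inner[OF convex_couplings])
  moreover have "continuous_on (couplings a b) (\<lambda>x. C \<bullet> x)"
    by (rule continuous_on_inner[OF continuous_on_const continuous_on_id])
  ultimately have ex1: "\<exists>!p. entropic_minimizer a b lam (\<lambda>x. C \<bullet> x) p"
    by (rule ex1_entropic_minimizer[OF a b lam])
  have "Phi a b lam C = (THE p. entropic_minimizer a b lam (\<lambda>x. C \<bullet> x) p)"
    unfolding Phi_def entropic_minimizer_def ..
  then show ?thesis
    using theI'[OF ex1] the1_equality[OF ex1] by metis
qed

lemma difference_quotient_along_segment_tendsto:
  fixes g :: "'a::real_inner \<Rightarrow> real"
  assumes "(g has_derivative (\<lambda>H. G \<bullet> H)) (at p)"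
  shows "((\<lambda>t. (g ((1 - t) *\<^sub>R p + t *\<^sub>R q) - g p) / t) \<longlongrightarrow> G \<bullet> (q - p)) (at_right 0)"
proof -
  have seg: "(1 - t) *\<^sub>R p + t *\<^sub>R q = p + t *\<^sub>R (q - p)" for t :: real
    by (simp add: algebra_simps)
  have "((\<lambda>t::real. p + t *\<^sub>R (q - p)) has_derivative (\<lambda>t. t *\<^sub>R (q - p))) (at 0)"
    by (auto intro!: derivative_eq_intros)
  moreover have "(g has_derivative (\<lambda>H. G \<bullet> H)) (at ((\<lambda>t. p + t *\<^sub>R (q - p)) 0))"
    using assms by simp
  ultimately
  have "((\<lambda>t. g (p + t *\<^sub>R (q - p))) has_real_derivative G \<bullet> (q - p)) (at 0)"
    by (rule has_derivative_imp_has_field_derivative[OF has_derivative_compose]) simp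
  then have "((\<lambda>t. (g (p + t *\<^sub>R (q - p)) - g p) / t) \<longlongrightarrow> G \<bullet> (q - p)) (at 0)"
    by (simp add: has_field_derivative_iff)
  then show ?thesis
    unfolding seg by (rule tendsto_mono[rotated]) (simp add: at_le)
qed

lemma convex_on_ge_linearization:
  fixes g :: "'a::real_inner \<Rightarrow> real"
  assumes g: "convex_on S g" "(g has_derivative (\<lambda>H. G \<bullet> H)) (at p)" and pq: "p \<in> S" "q \<in> S"
  shows "g p + G \<bullet> (q - p) \<le> g q"
proof -
  have "\<forall>\<^sub>F t in at_right 0. (g ((1 - t) *\<^sub>R p + t *\<^sub>R q) - g p) / t \<le> g q - g p"
  proof (rule eventually_at_rightI[of 0 1])
    fix t :: real
    assume t: "t \<in> {0<..<1}"
    then have "g ((1 - t) *\<^sub>R p + t *\<^sub>R q) - g p \<le> t * (g q - g p)"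
      using convex_onD[OF g(1), of t p q] pq by (simp add: algebra_simps)
    with t show "(g ((1 - t) *\<^sub>R p + t *\<^sub>R q) - g p) / t \<le> g q - g p"
      by (simp add: divide_le_eq mult.commute)
  qed simp
  with difference_quotient_along_segment_tendsto[OF g(2)] have "G \<bullet> (q - p) \<le> g q - g p"
    by (rule tendsto_upperbound) simp
  then show ?thesis
    by simp
qed

lemma convex_minimizer_iff_linearized_minimizer:
  fixes g h :: "'a::real_inner \<Rightarrow> real"
  assumes g: "convex_on S g" "(g has_derivative (\<lambda>H. G \<bullet> H)) (at p)"
    and h: "convex_on S h" and p: "p \<in> S"
  shows "(\<forall>q\<in>S. g p + h p \<le> g q + h q) \<longleftrightarrow> (\<forall>q\<in>S. G \<bullet> p + h p \<le> G \<bullet> q + h q)"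
proof (intro iffI ballI)
  fix q assume "\<forall>q\<in>S. G \<bullet> p + h p \<le> G \<bullet> q + h q" "q \<in> S"
  with convex_on_ge_linearization[OF g p \<open>q \<in> S\<close>] show "g p + h p \<le> g q + h q"
    by (auto simp: inner_diff_right)
next
  fix q assume min: "\<forall>q\<in>S. g p + h p \<le> g q + h q" and q: "q \<in> S"
  have "\<forall>\<^sub>F t in at_right 0. h p - h q \<le> (g ((1 - t) *\<^sub>R p + t *\<^sub>R q) - g p) / t"
  proof (rule eventually_at_rightI[of 0 1])
    fix t :: real
    assume t: "t \<in> {0<..<1}"
    have "(1 - t) *\<^sub>R p + t *\<^sub>R q \<in> S"
      using convex_on_imp_convex[OF h] p q t by (simp add: convex_alt)
    with min have "g p + h p \<le> g ((1 - t) *\<^sub>R p + t *\<^sub>R q) + h ((1 - t) *\<^sub>R p + t *\<^sub>R q)"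
      by blast
    moreover have "h ((1 - t) *\<^sub>R p + t *\<^sub>R q) \<le> (1 - t) * h p + t * h q"
      using convex_onD[OF h, of t p q] p q t by simp
    ultimately have "t * (h p - h q) \<le> g ((1 - t) *\<^sub>R p + t *\<^sub>R q) - g p"
      by (simp add: algebra_simps)
    with t show "h p - h q \<le> (g ((1 - t) *\<^sub>R p + t *\<^sub>R q) - g p) / t"
      by (simp add: le_divide_eq mult.commute)
  qed simp
  with difference_quotient_along_segment_tendsto[OF g(2)] have "h p - h q \<le> G \<bullet> (q - p)"
    by (rule tendsto_lowerbound) simp
  then show "G \<bullet> p + h p \<le> G \<bullet> q + h q"
    by (simp add: inner_diff_right)
qed

lemma Phi_fixed_point_iff_entropic_minimizer:
  assumes a: "a \<in> simplex_pos" and b: "b \<in> simplex_pos" and lam: "lam > 0"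
    and g: "convex_on (couplings a b) g" "(g has_derivative (\<lambda>H. G \<bullet> H)) (at p)"
  shows "Phi a b lam G = p \<longleftrightarrow> entropic_minimizer a b lam g p"
proof -
  have "convex_on (couplings a b) (\<lambda>q. lam * entropy q)"
    using lam convex_on_subset[OF convex_on_entropy couplings_subset_nonneg_matrices convex_couplings]
    by (intro convex_on_cmul) simp_all
  with g show ?thesis
    unfolding Phi_eq_iff[OF a b lam] entropic_minimizer_def
    using convex_minimizer_iff_linearized_minimizer by blast
qed

theorem proposition2:
  fixes a :: "real^'n" and b :: "real^'m" and lam :: real
    and g :: "real^'m^'n \<Rightarrow> real" and grad_g :: "real^'m^'n \<Rightarrow> real^'m^'n"
  assumes a: "a \<in> simplex_pos" and b: "b \<in> simplex_pos" and lam: "lam > 0"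
    and grad: "\<And>A. (g has_derivative (\<lambda>H. grad_g A \<bullet> H)) (at A)"
    and cvx: "convex_on UNIV g"
  shows "(\<exists>!p. p \<in> couplings a b \<and>
           (\<forall>q\<in>couplings a b. g p + lam * entropy p \<le> g q + lam * entropy q))
       \<and> (\<forall>p. (p \<in> couplings a b \<and>
           (\<forall>q\<in>couplings a b. g p + lam * entropy p \<le> g q + lam * entropy q))
         \<longrightarrow> p \<in> couplings_pos a b \<and> Phi a b lam (grad_g p) = p
             \<and> (\<forall>A. Phi a b lam (grad_g A) = A \<longrightarrow> A = p))"
proof -
  have g: "convex_on (couplings a b) g"
    using convex_on_subset[OF cvx _ convex_couplings] by simp
  have "continuous_on (couplings a b) g"
    by (intro continuous_at_imp_continuous_on ballI has_derivative_continuous[OF grad])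
  with g have ex1: "\<exists>!p. entropic_minimizer a b lam g p"
    by (rule ex1_entropic_minimizer[OF a b lam])
  note fixed_point_iff = Phi_fixed_point_iff_entropic_minimizer[OF a b lam g grad]
  note pos = entropic_minimizer_pos[OF a b lam g]
  show ?thesis
    unfolding entropic_minimizer_def[symmetric]
    using ex1 fixed_point_iff pos by blast
qed

end
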